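(* Let $(\mathcal{E},\mathcal{L},\mathcal{B})$ be a weakly left resolving labelled space whose accommodating family $\mathcal{B}$ is closed under relative complements, and let $S$ be its associated inverse semigroup. Then a filter $\xi$ in $E(S)$ with word $\alpha$ is tight if and only if either (i) $\xi$ is of infinite type and is an ultrafilter; or (ii) $\xi$ is of finite type, $\xi_{|\alpha|}$ is an ultrafilter in $\mathcal{B}_\alpha$, and for each $A\in\xi_{|\alpha|}$ at least one of the following holds: (a) $\mathcal{L}(A\mathcal{E}^1)$ is infinite; (b) there exists $B\in\mathcal{B}_\alpha$ with $\emptyset\neq B\subseteq A\cap\mathcal{E}^0_{sink}$.
   Context: A directed graph $\mathcal{E}=(\mathcal{E}^0,\mathcal{E}^1,r,s)$ has countable nonempty vertex set, edge set, range/source maps; paths satisfy $r(\lambda_i)=s(\lambda_{i+1})$. A vertex $v$ is a sink if $s^{-1}(v)=\emptyset$; $\mathcal{E}^0_{sink}$ is the set of sinks. A labelled graph over the alphabet $\mathcal{A}$ has a surjective labelling $\mathcal{L}:\mathcal{E}^1\to\mathcal{A}$ extended letterwise to finite and infinite paths; for $A\subseteq\mathcal{E}^0$, $\mathcal{L}(A\mathcal{E}^1)=\{\mathcal{L}(e): e\in\mathcal{E}^1,\ s(e)\in A\}$. $\omega$ is the empty word, $\mathcal{L}^+=\bigcup_{n\ge1}\mathcal{L}(\mathcal{E}^n)$, $\mathcal{L}^*=\{\omega\}\cup\mathcal{L}^+$, $\mathcal{L}^\infty$ the labels of infinite paths; $\alpha_{i,j}=\alpha_i\cdots\alpha_j$,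 $\alpha_{1,0}=\omega$. For $A\subseteq\mathcal{E}^0$, $\alpha\in\mathcal{L}^+$: $r(A,\alpha)=\{r(\lambda):\mathcal{L}(\lambda)=\alpha,\ s(\lambda)\in A\}$, $r(A,\omega)=A$, $r(\alpha)=r(\mathcal{E}^0,\alpha)$. $\mathcal{B}$ accommodating: closed under $r(\cdot,\alpha)$, finite intersections and unions, contains $r(\alpha)$ for $\alpha\in\mathcal{L}^+$; labelled space weakly left resolving if $r(A\cap B,\alpha)=r(A,\alpha)\cap r(B,\alpha)$ for $A,B\in\mathcal{B}$, $\alpha\in\mathcal{L}^+$. $\mathcal{B}_\alpha=\mathcal{B}\cap\mathcal{P}(r(\alpha))$, $\mathcal{B}_\omega=\mathcal{B}$. $S$ = triples $(\alpha,A,\beta)$, $\alpha,\beta\in\mathcal{L}^*$, $\emptyset\ne A\in\mathcal{B}_\alpha\cap\mathcal{B}_\beta$, plus $0$; product $(\alpha,A,\beta)(\gamma,B,\delta)=(\alpha\gamma',r(A,\gamma')\cap B,\delta)$ if $\gamma=\beta\gamma'$, $=(\alpha,A\cap r(B,\beta'),\delta\beta')$ if $\beta=\gamma\beta'$, $=0$ otherwise (empty middle entry identified with $0$). $E(S)=\{(\alpha,A,\alpha)\}\cup\{0\}$, $p\le q$ iff $pq=p$. A filter in a poset with least element $0$ is a nonempty upward-closed subset not containing $0$ in which any two elements have a common lower bound in it; an ultrafilter is a maximal filter; filters in $\mathcal{B}_\alpha$ are under inclusion. The words of elements of a filter $\xi$ in $E(S)$ are pairwise comparable; if there is a longest one,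 it is the word $\alpha\in\mathcal{L}^*$ of $\xi$ (finite type), otherwise $\xi$ is of infinite type and its word is the unique $\alpha\in\mathcal{L}^\infty$ such that all elements of $\xi$ are of the form $(\alpha_{1,n},A,\alpha_{1,n})$. $\xi_n=\{A\in\mathcal{B}:(\alpha_{1,n},A,\alpha_{1,n})\in\xi\}$. For $x\in E(S)$, $Z\subseteq\{y:y\le x\}$ is a cover of $x$ if every nonzero $y\le x$ has $zy\neq0$ for some $z\in Z$; a filter $\xi$ is tight if $Z\cap\xi\neq\emptyset$ for every $x\in\xi$ and every finite cover $Z$ of $x$. *)

theory Defs
  imports Main "HOL-Library.Countable_Set" "HOL-Library.Sublist"
begin

text \<open>A directed graph: vertex set = UNIV :: 'v set (countable, nonempty as a type),
edge set Ed :: 'e set (countable), range r, source s. Labelling lab restricted to Ed;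
the alphabet is lab ` Ed (so the labelling is surjective by construction).
Words are lists; the empty word omega is [].\<close>

definition fpaths :: "'e set \<Rightarrow> ('e \<Rightarrow> 'v) \<Rightarrow> ('e \<Rightarrow> 'v) \<Rightarrow> 'e list set" where
  "fpaths Ed r s = {p. p \<noteq> [] \<and> set p \<subseteq> Ed \<and>
       (\<forall>i. Suc i < length p \<longrightarrow> r (p ! i) = s (p ! Suc i))}"

definition Lplus :: "'e set \<Rightarrow> ('e \<Rightarrow> 'v) \<Rightarrow> ('e \<Rightarrow> 'v) \<Rightarrow> ('e \<Rightarrow> 'a) \<Rightarrow> 'a list set" where
  "Lplus Ed r s lab = map lab ` fpaths Ed r s"

definition Lstar :: "'e set \<Rightarrow> ('e \<Rightarrow> 'v) \<Rightarrow> ('e \<Rightarrow> 'v) \<Rightarrow> ('e \<Rightarrow> 'a) \<Rightarrow> 'a list set" where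
  "Lstar Ed r s lab = insert [] (Lplus Ed r s lab)"

definition rel_range :: "'e set \<Rightarrow> ('e \<Rightarrow> 'v) \<Rightarrow> ('e \<Rightarrow> 'v) \<Rightarrow> ('e \<Rightarrow> 'a) \<Rightarrow> 'v set \<Rightarrow> 'a list \<Rightarrow> 'v set" where
  "rel_range Ed r s lab A \<alpha> =
     (if \<alpha> = [] then A
      else {r (last p) | p. p \<in> fpaths Ed r s \<and> map lab p = \<alpha> \<and> s (hd p) \<in> A})"

definition rng :: "'e set \<Rightarrow> ('e \<Rightarrow> 'v) \<Rightarrow> ('e \<Rightarrow> 'v) \<Rightarrow> ('e \<Rightarrow> 'a) \<Rightarrow> 'a list \<Rightarrow> 'v set" where
  "rng Ed r s lab \<alpha> = rel_range Ed r s lab UNIV \<alpha>"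

definition accommodating :: "'e set \<Rightarrow> ('e \<Rightarrow> 'v) \<Rightarrow> ('e \<Rightarrow> 'v) \<Rightarrow> ('e \<Rightarrow> 'a) \<Rightarrow> 'v set set \<Rightarrow> bool" where
  "accommodating Ed r s lab B \<longleftrightarrow>
     (\<forall>A\<in>B. \<forall>\<alpha>\<in>Lplus Ed r s lab. rel_range Ed r s lab A \<alpha> \<in> B) \<and>
     (\<forall>A\<in>B. \<forall>C\<in>B. A \<inter> C \<in> B \<and> A \<union> C \<in> B) \<and>
     (\<forall>\<alpha>\<in>Lplus Ed r s lab. rng Ed r s lab \<alpha> \<in> B)"

definition weakly_left_resolving :: "'e set \<Rightarrow> ('e \<Rightarrow> 'v) \<Rightarrow> ('e \<Rightarrow> 'v) \<Rightarrow> ('e \<Rightarrow> 'a) \<Rightarrow> 'v set set \<Rightarrow> bool" where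
  "weakly_left_resolving Ed r s lab B \<longleftrightarrow>
     (\<forall>A\<in>B. \<forall>C\<in>B. \<forall>\<alpha>\<in>Lplus Ed r s lab.
        rel_range Ed r s lab (A \<inter> C) \<alpha> = rel_range Ed r s lab A \<alpha> \<inter> rel_range Ed r s lab C \<alpha>)"

definition closed_rel_compl :: "'v set set \<Rightarrow> bool" where
  "closed_rel_compl B \<longleftrightarrow> (\<forall>A\<in>B. \<forall>C\<in>B. A - C \<in> B)"

definition Bsub :: "'e set \<Rightarrow> ('e \<Rightarrow> 'v) \<Rightarrow> ('e \<Rightarrow> 'v) \<Rightarrow> ('e \<Rightarrow> 'a) \<Rightarrow> 'v set set \<Rightarrow> 'a list \<Rightarrow> 'v set set" where
  "Bsub Ed r s lab B \<alpha> = (if \<alpha> = [] then B else {A \<in> B. A \<subseteq> rng Ed r s lab \<alpha>})"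

text \<open>Elements of S: None is 0, Some (alpha, A, beta) is the triple.\<close>
type_synonym ('a,'v) selem = "('a list \<times> 'v set \<times> 'a list) option"

definition Sset :: "'e set \<Rightarrow> ('e \<Rightarrow> 'v) \<Rightarrow> ('e \<Rightarrow> 'v) \<Rightarrow> ('e \<Rightarrow> 'a) \<Rightarrow> 'v set set \<Rightarrow> ('a,'v) selem set" where
  "Sset Ed r s lab B = insert None
     {Some (\<alpha>, A, \<beta>) | \<alpha> A \<beta>. \<alpha> \<in> Lstar Ed r s lab \<and> \<beta> \<in> Lstar Ed r s lab \<and> A \<noteq> {} \<and>
         A \<in> Bsub Ed r s lab B \<alpha> \<and> A \<in> Bsub Ed r s lab B \<beta>}"

definition mk :: "'a list \<Rightarrow> 'v set \<Rightarrow> 'a list \<Rightarrow> ('a,'v) selem" where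
  "mk \<alpha> A \<beta> = (if A = {} then None else Some (\<alpha>, A, \<beta>))"

fun smult :: "'e set \<Rightarrow> ('e \<Rightarrow> 'v) \<Rightarrow> ('e \<Rightarrow> 'v) \<Rightarrow> ('e \<Rightarrow> 'a) \<Rightarrow> ('a,'v) selem \<Rightarrow> ('a,'v) selem \<Rightarrow> ('a,'v) selem" where
  "smult Ed r s lab None q = None"
| "smult Ed r s lab (Some p) None = None"
| "smult Ed r s lab (Some (\<alpha>, A, \<beta>)) (Some (\<gamma>, C, \<delta>)) =
     (if prefix \<beta> \<gamma> then
        (let \<gamma>' = drop (length \<beta>) \<gamma> in mk (\<alpha> @ \<gamma>') (rel_range Ed r s lab A \<gamma>' \<inter> C) \<delta>)
      else if prefix \<gamma> \<beta> then
        (let \<beta>' = drop (length \<gamma>) \<beta> in mk \<alpha> (A \<inter> rel_range Ed r s lab C \<beta>') (\<delta> @ \<beta>'))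
      else None)"

definition ES :: "'e set \<Rightarrow> ('e \<Rightarrow> 'v) \<Rightarrow> ('e \<Rightarrow> 'v) \<Rightarrow> ('e \<Rightarrow> 'a) \<Rightarrow> 'v set set \<Rightarrow> ('a,'v) selem set" where
  "ES Ed r s lab B = insert None
     {Some (\<alpha>, A, \<alpha>) | \<alpha> A. \<alpha> \<in> Lstar Ed r s lab \<and> A \<noteq> {} \<and> A \<in> Bsub Ed r s lab B \<alpha>}"

definition sleq :: "'e set \<Rightarrow> ('e \<Rightarrow> 'v) \<Rightarrow> ('e \<Rightarrow> 'v) \<Rightarrow> ('e \<Rightarrow> 'a) \<Rightarrow> ('a,'v) selem \<Rightarrow> ('a,'v) selem \<Rightarrow> bool" where
  "sleq Ed r s lab p q \<longleftrightarrow> smult Ed r s lab p q = p"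

definition filterE :: "'e set \<Rightarrow> ('e \<Rightarrow> 'v) \<Rightarrow> ('e \<Rightarrow> 'v) \<Rightarrow> ('e \<Rightarrow> 'a) \<Rightarrow> 'v set set \<Rightarrow> ('a,'v) selem set \<Rightarrow> bool" where
  "filterE Ed r s lab B \<xi> \<longleftrightarrow>
     \<xi> \<subseteq> ES Ed r s lab B \<and> \<xi> \<noteq> {} \<and> None \<notin> \<xi> \<and>
     (\<forall>x\<in>\<xi>. \<forall>y\<in>ES Ed r s lab B. sleq Ed r s lab x y \<longrightarrow> y \<in> \<xi>) \<and>
     (\<forall>x\<in>\<xi>. \<forall>y\<in>\<xi>. \<exists>z\<in>\<xi>. sleq Ed r s lab z x \<and> sleq Ed r s lab z y)"

definition ultrafilterE :: "'e set \<Rightarrow> ('e \<Rightarrow> 'v) \<Rightarrow> ('e \<Rightarrow> 'v) \<Rightarrow> ('e \<Rightarrow> 'a) \<Rightarrow> 'v set set \<Rightarrow> ('a,'v) selem set \<Rightarrow> bool" where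
  "ultrafilterE Ed r s lab B \<xi> \<longleftrightarrow> filterE Ed r s lab B \<xi> \<and>
     (\<forall>\<eta>. filterE Ed r s lab B \<eta> \<and> \<xi> \<subseteq> \<eta> \<longrightarrow> \<eta> = \<xi>)"

definition set_filter :: "'v set set \<Rightarrow> 'v set set \<Rightarrow> bool" where
  "set_filter F \<phi> \<longleftrightarrow> \<phi> \<subseteq> F \<and> \<phi> \<noteq> {} \<and> {} \<notin> \<phi> \<and>
     (\<forall>A\<in>\<phi>. \<forall>C\<in>F. A \<subseteq> C \<longrightarrow> C \<in> \<phi>) \<and>
     (\<forall>A\<in>\<phi>. \<forall>C\<in>\<phi>. \<exists>D\<in>\<phi>. D \<subseteq> A \<and> D \<subseteq> C)"

definition set_ultrafilter :: "'v set set \<Rightarrow> 'v set set \<Rightarrow> bool" where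
  "set_ultrafilter F \<phi> \<longleftrightarrow> set_filter F \<phi> \<and> (\<forall>\<psi>. set_filter F \<psi> \<and> \<phi> \<subseteq> \<psi> \<longrightarrow> \<psi> = \<phi>)"

definition filter_words :: "('a,'v) selem set \<Rightarrow> 'a list set" where
  "filter_words \<xi> = {\<alpha>. \<exists>A. Some (\<alpha>, A, \<alpha>) \<in> \<xi>}"

definition finite_type_word :: "('a,'v) selem set \<Rightarrow> 'a list \<Rightarrow> bool" where
  "finite_type_word \<xi> \<alpha> \<longleftrightarrow> \<alpha> \<in> filter_words \<xi> \<and> (\<forall>\<beta>\<in>filter_words \<xi>. length \<beta> \<le> length \<alpha>)"

definition infinite_type :: "('a,'v) selem set \<Rightarrow> bool" where
  "infinite_type \<xi> \<longleftrightarrow> \<not> (\<exists>\<alpha>. finite_type_word \<xi> \<alpha>)"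

definition xi_at :: "'v set set \<Rightarrow> ('a,'v) selem set \<Rightarrow> 'a list \<Rightarrow> nat \<Rightarrow> 'v set set" where
  "xi_at B \<xi> \<alpha> n = {A \<in> B. Some (take n \<alpha>, A, take n \<alpha>) \<in> \<xi>}"

definition is_cover :: "'e set \<Rightarrow> ('e \<Rightarrow> 'v) \<Rightarrow> ('e \<Rightarrow> 'v) \<Rightarrow> ('e \<Rightarrow> 'a) \<Rightarrow> 'v set set \<Rightarrow> ('a,'v) selem \<Rightarrow> ('a,'v) selem set \<Rightarrow> bool" where
  "is_cover Ed r s lab B x Z \<longleftrightarrow>
     Z \<subseteq> {y \<in> ES Ed r s lab B. sleq Ed r s lab y x} \<and>
     (\<forall>y\<in>ES Ed r s lab B. y \<noteq> None \<and> sleq Ed r s lab y x \<longrightarrow> (\<exists>z\<in>Z. smult Ed r s lab z y \<noteq> None))"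

definition tight :: "'e set \<Rightarrow> ('e \<Rightarrow> 'v) \<Rightarrow> ('e \<Rightarrow> 'v) \<Rightarrow> ('e \<Rightarrow> 'a) \<Rightarrow> 'v set set \<Rightarrow> ('a,'v) selem set \<Rightarrow> bool" where
  "tight Ed r s lab B \<xi> \<longleftrightarrow>
     (\<forall>x\<in>\<xi>. \<forall>Z. finite Z \<and> is_cover Ed r s lab B x Z \<longrightarrow> Z \<inter> \<xi> \<noteq> {})"

definition sinks :: "'e set \<Rightarrow> ('e \<Rightarrow> 'v) \<Rightarrow> 'v set" where
  "sinks Ed s = {v. \<forall>e\<in>Ed. s e \<noteq> v}"

definition out_labels :: "'e set \<Rightarrow> ('e \<Rightarrow> 'v) \<Rightarrow> ('e \<Rightarrow> 'a) \<Rightarrow> 'v set \<Rightarrow> 'a set" where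
  "out_labels Ed s lab A = lab ` {e \<in> Ed. s e \<in> A}"

end

theory Submission
  imports Defs
begin

text \<open>
  The element \<open>(\<alpha>, A, \<alpha>)\<close> is covered by \<open>(\<alpha>, A \<inter> C, \<alpha>)\<close> and \<open>(\<alpha>, A - C, \<alpha>)\<close> for every
  \<open>C \<in> B\<close>, so a tight filter decides every \<open>C\<close> at each of its words. For infinite type, where
  the words are unbounded, this makes the filter maximal; for finite type with word \<open>\<alpha>\<close> it makes
  \<open>\<xi>\<^bsub>|\<alpha>|\<^esub>\<close> an ultrafilter. If some \<open>A \<in> \<xi>\<^bsub>|\<alpha>|\<^esub>\<close> had finitely many outgoing labels and no sink
  part, the one-letter extensions \<open>(\<alpha>a, r(A, a), \<alpha>a)\<close> would cover \<open>(\<alpha>, A, \<alpha>)\<close> and force a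
  longer word into \<open>\<xi>\<close>.

  Conversely ultrafilters are tight. In the finite case, maximality of \<open>\<xi>\<^bsub>|\<alpha>|\<^esub>\<close> gives for each
  member \<open>z \<notin> \<xi>\<close> of a finite cover some \<open>D \<in> \<xi>\<^bsub>|\<alpha>|\<^esub>\<close> with \<open>z (\<alpha>, D, \<alpha>) = 0\<close>. Intersecting these
  sets, a sink part of \<open>D\<close>, or a label leaving \<open>D\<close> that continues no word of the cover beyond
  \<open>\<alpha>\<close>, yields an element below \<open>(\<alpha>, D, \<alpha>)\<close> that the cover does not meet.
\<close>

section \<open>Relative ranges\<close>

locale labelled_graph =
  fixes Ed :: "'e set" and r s :: "'e \<Rightarrow> 'v" and lab :: "'e \<Rightarrow> 'a"
begin

abbreviation R :: "'v set \<Rightarrow> 'a list \<Rightarrow> 'v set" where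
  "R \<equiv> rel_range Ed r s lab"

lemma fpaths_Cons:
  "q \<noteq> [] \<Longrightarrow> e # q \<in> fpaths Ed r s \<longleftrightarrow> e \<in> Ed \<and> r e = s (hd q) \<and> q \<in> fpaths Ed r s"
  by (auto simp: fpaths_def hd_conv_nth nth_Cons split: nat.splits)

lemma rel_range_Nil [simp]: "R A [] = A"
  by (simp add: rel_range_def)

lemma fpaths_single [simp]: "[e] \<in> fpaths Ed r s \<longleftrightarrow> e \<in> Ed"
  by (simp add: fpaths_def)

lemma rel_range_single: "R A [a] = {r e |e. e \<in> Ed \<and> lab e = a \<and> s e \<in> A}"
proof (intro equalityI subsetI)
  fix v assume "v \<in> R A [a]"
  then show "v \<in> {r e |e. e \<in> Ed \<and> lab e = a \<and> s e \<in> A}"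
    by (auto simp: rel_range_def map_eq_Cons_conv)
next
  fix v assume "v \<in> {r e |e. e \<in> Ed \<and> lab e = a \<and> s e \<in> A}"
  then obtain e where "e \<in> Ed" "lab e = a" "s e \<in> A" "v = r e" by blast
  then show "v \<in> R A [a]"
    unfolding rel_range_def by (auto intro!: exI[of _ "[e]"])
qed

text \<open>Not a simp rule: the right-hand side contains the instance \<open>R A [a]\<close> of the left-hand side.\<close>

lemma rel_range_Cons: "R A (a # w) = R (R A [a]) w"
proof (cases "w = []")
  case False
  show ?thesis
  proof (intro equalityI subsetI)
    fix v assume "v \<in> R A (a # w)"
    then obtain p where p: "p \<in> fpaths Ed r s" "map lab p = a # w" "s (hd p) \<in> A" "v = r (last p)"
      by (auto simp: rel_range_def)
    then obtain e q where eq: "p = e # q" "lab e = a" "map lab q = w"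
      by (auto simp: map_eq_Cons_conv)
    with False have "q \<noteq> []" by auto
    with p eq have q: "q \<in> fpaths Ed r s" "e \<in> Ed" "r e = s (hd q)" "v = r (last q)"
      by (simp_all add: fpaths_Cons)
    moreover have "s e \<in> A" using p(3) eq(1) by simp
    ultimately have "r e \<in> R A [a]"
      using eq(2) unfolding rel_range_single by blast
    with q have "q \<in> fpaths Ed r s" "s (hd q) \<in> R A [a]" "v = r (last q)"
      by simp_all
    with False eq show "v \<in> R (R A [a]) w"
      unfolding rel_range_def[where \<alpha> = w] by auto
  next
    fix v assume "v \<in> R (R A [a]) w"
    then obtain q where q: "q \<in> fpaths Ed r s" "map lab q = w" "s (hd q) \<in> R A [a]" "v = r (last q)"
      using False unfolding rel_range_def[where \<alpha> = w] by auto
    from q(3) obtain e where e: "e \<in> Ed" "lab e = a" "s e \<in> A" "s (hd q) = r e"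
      unfolding rel_range_single by blast
    from False q have "q \<noteq> []" by auto
    with q e have "e # q \<in> fpaths Ed r s" "map lab (e # q) = a # w" "s (hd (e # q)) \<in> A"
        "v = r (last (e # q))"
      by (simp_all add: fpaths_Cons)
    then show "v \<in> R A (a # w)"
      unfolding rel_range_def by (simp only: list.distinct(2) if_False) (rule CollectI, rule exI[of _ "e # q"], simp)
  qed
qed simp

lemma rel_range_append: "R A (u @ w) = R (R A u) w"
proof (induction u arbitrary: A)
  case (Cons a u)
  then show ?case
    by (simp only: append_Cons rel_range_Cons[of A a "u @ w"] rel_range_Cons[of A a u])
qed simp

lemma rel_range_empty [simp]: "R {} w = {}"
proof (induction w)
  case (Cons a w)
  have "R {} [a] = {}" by (simp add: rel_range_single)
  with Cons show ?case by (simp only: rel_range_Cons[of "{}" a w])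
qed simp

lemma rel_range_mono: "A \<subseteq> C \<Longrightarrow> R A w \<subseteq> R C w"
proof (induction w arbitrary: A C)
  case (Cons a w)
  then have "R A [a] \<subseteq> R C [a]" by (auto simp: rel_range_single)
  with Cons.IH show ?case by (simp only: rel_range_Cons[of _ a w])
qed simp

lemma rel_range_Un: "R (A \<union> C) w = R A w \<union> R C w"
proof (induction w arbitrary: A C)
  case (Cons a w)
  have "R (A \<union> C) [a] = R A [a] \<union> R C [a]" by (auto simp: rel_range_single)
  with Cons.IH show ?case by (simp only: rel_range_Cons[of _ a w])
qed simp

lemma rel_range_sinks: "A \<subseteq> sinks Ed s \<Longrightarrow> w \<noteq> [] \<Longrightarrow> R A w = {}"
proof (cases w)
  case (Cons a w')
  assume "A \<subseteq> sinks Ed s"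
  then have "R A [a] = {}" by (auto simp: rel_range_single sinks_def)
  with Cons show ?thesis by (simp only: rel_range_Cons[of A a w'] rel_range_empty)
qed simp

lemma Lplus_iff: "w \<in> Lplus Ed r s lab \<longleftrightarrow> w \<noteq> [] \<and> R UNIV w \<noteq> {}"
  by (auto simp: Lplus_def rel_range_def fpaths_def)

lemma Bsub_eq: "Bsub Ed r s lab B w = {A \<in> B. A \<subseteq> R UNIV w}"
  by (simp add: Bsub_def rng_def)

lemma Some_in_ES_iff:
  "Some (w, A, w) \<in> ES Ed r s lab B \<longleftrightarrow> A \<in> B \<and> A \<noteq> {} \<and> A \<subseteq> R UNIV w"
  by (auto simp: ES_def Bsub_eq Lstar_def Lplus_iff)

lemma ES_elim:
  assumes "x \<in> ES Ed r s lab B" "x \<noteq> None"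
  obtains w A where "x = Some (w, A, w)" "A \<in> B" "A \<noteq> {}" "A \<subseteq> R UNIV w"
  using assms by (auto simp: ES_def Bsub_eq Lstar_def)

end

lemma prefix_append_drop: "prefix \<alpha> \<beta> \<Longrightarrow> \<alpha> @ drop (length \<alpha>) \<beta> = \<beta>"
  by (auto simp: prefix_def)

lemma prefix_drop_append:
  "prefix \<alpha> \<beta> \<Longrightarrow> prefix \<beta> \<delta> \<Longrightarrow> drop (length \<alpha>) \<beta> @ drop (length \<beta>) \<delta> = drop (length \<alpha>) \<delta>"
  by (auto simp: prefix_def)

section \<open>Filters in families of sets\<close>

lemma set_filter_subset: "set_filter F \<phi> \<Longrightarrow> \<phi> \<subseteq> F"
  by (simp add: set_filter_def)

lemma set_filter_nonempty: "set_filter F \<phi> \<Longrightarrow> \<phi> \<noteq> {}"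
  by (simp add: set_filter_def)

lemma set_filter_empty: "set_filter F \<phi> \<Longrightarrow> {} \<notin> \<phi>"
  by (simp add: set_filter_def)

lemma set_filter_lower:
  "set_filter F \<phi> \<Longrightarrow> A \<in> \<phi> \<Longrightarrow> C \<in> \<phi> \<Longrightarrow> \<exists>D\<in>\<phi>. D \<subseteq> A \<and> D \<subseteq> C"
  by (simp add: set_filter_def)

lemma set_ultrafilter_mem_if_meets:
  assumes U: "set_ultrafilter F \<phi>" and F_Int: "\<forall>X\<in>F. \<forall>Y\<in>F. X \<inter> Y \<in> F"
    and C: "C \<in> F" and meets: "\<forall>D\<in>\<phi>. D \<inter> C \<noteq> {}"
  shows "C \<in> \<phi>"
proof -
  let ?\<psi> = "{X \<in> F. \<exists>D\<in>\<phi>. D \<inter> C \<subseteq> X}"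
  have \<phi>: "set_filter F \<phi>" using U by (simp add: set_ultrafilter_def)
  then obtain D0 where "D0 \<in> \<phi>" using set_filter_nonempty by blast
  with C have C\<psi>: "C \<in> ?\<psi>" by auto
  have "set_filter F ?\<psi>"
    unfolding set_filter_def
  proof (intro conjI ballI impI)
    show "?\<psi> \<subseteq> F" by auto
    show "?\<psi> \<noteq> {}" using C\<psi> by auto
    show "{} \<notin> ?\<psi>" using meets by auto
  next
    fix X Y assume "X \<in> ?\<psi>" "Y \<in> F" "X \<subseteq> Y"
    then show "Y \<in> ?\<psi>" by auto
  next
    fix X Y assume "X \<in> ?\<psi>" "Y \<in> ?\<psi>"
    then obtain D1 D2 where D: "D1 \<in> \<phi>" "D2 \<in> \<phi>" "D1 \<inter> C \<subseteq> X" "D2 \<inter> C \<subseteq> Y" by auto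
    then obtain D3 where D3: "D3 \<in> \<phi>" "D3 \<subseteq> D1" "D3 \<subseteq> D2"
      using set_filter_lower[OF \<phi>] by meson
    then have "D3 \<in> F" using set_filter_subset[OF \<phi>] by auto
    with C F_Int have "D3 \<inter> C \<in> F" by auto
    with D3(1) have "D3 \<inter> C \<in> ?\<psi>" by auto
    moreover have "D3 \<inter> C \<subseteq> X" "D3 \<inter> C \<subseteq> Y" using D D3 by auto
    ultimately show "\<exists>Z\<in>?\<psi>. Z \<subseteq> X \<and> Z \<subseteq> Y" by (intro bexI[of _ "D3 \<inter> C"]) simp_all
  qed
  moreover have "\<phi> \<subseteq> ?\<psi>" using set_filter_subset[OF \<phi>] by auto
  ultimately have "?\<psi> = \<phi>" using U by (simp add: set_ultrafilter_def)
  with C\<psi> show ?thesis by simp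
qed

section \<open>The semilattice \<open>E(S)\<close>\<close>

locale labelled_space = labelled_graph Ed r s lab
  for Ed :: "'e set" and r s :: "'e \<Rightarrow> 'v" and lab :: "'e \<Rightarrow> 'a" +
  fixes B :: "'v set set"
  assumes accommodating: "accommodating Ed r s lab B"
    and weakly_left_resolving: "weakly_left_resolving Ed r s lab B"
    and closed_rel_compl: "closed_rel_compl B"
begin

abbreviation E :: "('a, 'v) selem set" where
  "E \<equiv> ES Ed r s lab B"

abbreviation mult :: "('a, 'v) selem \<Rightarrow> ('a, 'v) selem \<Rightarrow> ('a, 'v) selem" where
  "mult \<equiv> smult Ed r s lab"

abbreviation leq :: "('a, 'v) selem \<Rightarrow> ('a, 'v) selem \<Rightarrow> bool" (infix "\<preceq>" 50) where
  "x \<preceq> y \<equiv> sleq Ed r s lab x y"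

lemma Int_in_B: "A \<in> B \<Longrightarrow> C \<in> B \<Longrightarrow> A \<inter> C \<in> B"
  using accommodating by (auto simp: accommodating_def)

lemma Diff_in_B: "A \<in> B \<Longrightarrow> C \<in> B \<Longrightarrow> A - C \<in> B"
  using closed_rel_compl by (auto simp: closed_rel_compl_def)

lemma rel_range_outside_Lplus:
  "w \<noteq> [] \<Longrightarrow> w \<notin> Lplus Ed r s lab \<Longrightarrow> R A w = {}"
  using rel_range_mono[of A UNIV w] by (auto simp: Lplus_iff)

lemma rel_range_in_B: "A \<in> B \<Longrightarrow> R A w \<in> B"
proof -
  assume A: "A \<in> B"
  consider "w = []" | "w \<in> Lplus Ed r s lab" | "w \<noteq> []" "w \<notin> Lplus Ed r s lab" by blast
  then show ?thesis
  proof cases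
    case 2
    with A accommodating show ?thesis by (auto simp: accommodating_def)
  next
    case 3
    \<comment> \<open>the empty set lies in \<open>B\<close> as \<open>A - A\<close>\<close>
    with Diff_in_B[OF A A] show ?thesis by (simp add: rel_range_outside_Lplus)
  qed (use A in simp)
qed

lemma rel_range_Int: "A \<in> B \<Longrightarrow> C \<in> B \<Longrightarrow> R (A \<inter> C) w = R A w \<inter> R C w"
  using weakly_left_resolving rel_range_outside_Lplus[of w]
  by (cases "w = []"; cases "w \<in> Lplus Ed r s lab") (auto simp: weakly_left_resolving_def)

lemma rel_range_disjoint: "A \<in> B \<Longrightarrow> C \<in> B \<Longrightarrow> A \<inter> C = {} \<Longrightarrow> R A w \<inter> R C w = {}"
  using rel_range_Int[of A C w] by simp

lemma mult_Some:
  "mult (Some (\<alpha>, A, \<alpha>)) (Some (\<beta>, C, \<beta>)) =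
    (if prefix \<alpha> \<beta> then mk \<beta> (R A (drop (length \<alpha>) \<beta>) \<inter> C) \<beta>
     else if prefix \<beta> \<alpha> then mk \<alpha> (A \<inter> R C (drop (length \<beta>) \<alpha>)) \<alpha> else None)"
  by (simp add: Let_def prefix_append_drop)

declare smult.simps(3) [simp del]

lemma mk_nonempty: "X \<noteq> {} \<Longrightarrow> mk w X w = Some (w, X, w)"
  by (simp add: mk_def)

lemma mult_None_right [simp]: "mult x None = None"
  by (cases x) auto

lemma None_leq [simp]: "None \<preceq> y"
  by (simp add: sleq_def)

lemma leq_None: "x \<preceq> None \<Longrightarrow> x = None"
  by (cases x) (auto simp: sleq_def)

lemma Some_leq_not_None: "Some p \<preceq> y \<Longrightarrow> y \<noteq> None"
  by (cases y) (auto simp: sleq_def)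

lemma Some_leq_Some_iff:
  assumes "A \<noteq> {}"
  shows "Some (\<alpha>, A, \<alpha>) \<preceq> Some (\<beta>, C, \<beta>) \<longleftrightarrow> prefix \<beta> \<alpha> \<and> A \<subseteq> R C (drop (length \<beta>) \<alpha>)"
proof (cases "prefix \<alpha> \<beta>")
  case True
  show ?thesis
  proof (cases "\<alpha> = \<beta>")
    case False
    with True have "\<not> prefix \<beta> \<alpha>" using prefix_order.antisym by blast
    with True False show ?thesis by (simp add: sleq_def mult_Some mk_def)
  qed (use assms in \<open>auto simp: sleq_def mult_Some mk_def\<close>)
qed (use assms in \<open>auto simp: sleq_def mult_Some mk_def\<close>)

lemma None_in_E [simp]: "None \<in> E"
  by (simp add: ES_def)

lemma mult_in_E: "x \<in> E \<Longrightarrow> y \<in> E \<Longrightarrow> mult x y \<in> E"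
proof -
  assume x: "x \<in> E" and y: "y \<in> E"
  show ?thesis
  proof (cases "x = None \<or> y = None")
    case True
    then show ?thesis by auto
  next
    case False
    then obtain \<alpha> A \<beta> C where xa: "x = Some (\<alpha>, A, \<alpha>)" "A \<in> B" "A \<subseteq> R UNIV \<alpha>"
      and yb: "y = Some (\<beta>, C, \<beta>)" "C \<in> B" "C \<subseteq> R UNIV \<beta>"
      using x y by (metis ES_elim)
    have "R A (drop (length \<alpha>) \<beta>) \<inter> C \<in> B" "A \<inter> R C (drop (length \<beta>) \<alpha>) \<in> B"
      using xa yb by (simp_all add: Int_in_B rel_range_in_B)
    with xa yb show ?thesis
      by (auto simp: mult_Some mk_def Some_in_ES_iff)
  qed
qed

lemma leq_refl:
  assumes "x \<in> E"
  shows "x \<preceq> x"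
proof (cases "x = None")
  case False
  with assms obtain w A where "x = Some (w, A, w)" "A \<noteq> {}" by (blast elim: ES_elim)
  then show ?thesis by (simp add: Some_leq_Some_iff)
qed simp

lemma mult_lower:
  assumes "x \<in> E" "y \<in> E"
  shows "mult x y \<preceq> x" "mult x y \<preceq> y"
proof -
  have "mult x y \<preceq> x \<and> mult x y \<preceq> y"
  proof (cases "mult x y = None")
    case False
    then have "x \<noteq> None" "y \<noteq> None" by (metis smult.simps(1) mult_None_right)+
    then obtain \<alpha> A \<beta> C where "x = Some (\<alpha>, A, \<alpha>)" "y = Some (\<beta>, C, \<beta>)"
      using assms by (metis ES_elim)
    with False show ?thesis
      by (auto simp: mult_Some mk_def Some_leq_Some_iff split: if_splits)
  qed simp
  then show "mult x y \<preceq> x" "mult x y \<preceq> y" by simp_all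
qed

lemma mult_commute:
  assumes "x \<in> E" "y \<in> E"
  shows "mult x y = mult y x"
proof (cases "x = None \<or> y = None")
  case False
  then obtain \<alpha> A \<beta> C where "x = Some (\<alpha>, A, \<alpha>)" "y = Some (\<beta>, C, \<beta>)"
    using assms by (metis ES_elim)
  then show ?thesis
    using prefix_order.antisym[of \<alpha> \<beta>] by (auto simp: mult_Some Int_commute)
qed auto

lemma mult_greatest_prefix:
  assumes z: "Some (\<delta>, D, \<delta>) \<preceq> Some (\<alpha>, A, \<alpha>)" "Some (\<delta>, D, \<delta>) \<preceq> Some (\<beta>, C, \<beta>)"
    and D: "D \<noteq> {}" and AC: "A \<in> B" "C \<in> B" and \<alpha>\<beta>: "prefix \<alpha> \<beta>"
  shows "Some (\<delta>, D, \<delta>) \<preceq> mult (Some (\<alpha>, A, \<alpha>)) (Some (\<beta>, C, \<beta>))"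
proof -
  let ?M = "R A (drop (length \<alpha>) \<beta>) \<inter> C"
  have \<alpha>\<delta>: "prefix \<alpha> \<delta>" "D \<subseteq> R A (drop (length \<alpha>) \<delta>)"
    and \<beta>\<delta>: "prefix \<beta> \<delta>" "D \<subseteq> R C (drop (length \<beta>) \<delta>)"
    using z D by (simp_all add: Some_leq_Some_iff)
  have "R ?M (drop (length \<beta>) \<delta>) = R (R A (drop (length \<alpha>) \<beta>)) (drop (length \<beta>) \<delta>) \<inter> R C (drop (length \<beta>) \<delta>)"
    using AC by (simp add: rel_range_Int rel_range_in_B)
  also have "R (R A (drop (length \<alpha>) \<beta>)) (drop (length \<beta>) \<delta>) = R A (drop (length \<alpha>) \<delta>)"
    by (simp add: rel_range_append[symmetric] prefix_drop_append[OF \<alpha>\<beta> \<beta>\<delta>(1)])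
  finally have M: "D \<subseteq> R ?M (drop (length \<beta>) \<delta>)"
    using \<alpha>\<delta>(2) \<beta>\<delta>(2) by blast
  with D have "?M \<noteq> {}" by auto
  then have "mult (Some (\<alpha>, A, \<alpha>)) (Some (\<beta>, C, \<beta>)) = Some (\<beta>, ?M, \<beta>)"
    using \<alpha>\<beta> by (simp add: mult_Some mk_nonempty)
  with M \<beta>\<delta>(1) D show ?thesis by (simp add: Some_leq_Some_iff)
qed

lemma mult_greatest:
  assumes "z \<in> E" "x \<in> E" "y \<in> E" "z \<preceq> x" "z \<preceq> y"
  shows "z \<preceq> mult x y"
proof (cases "z = None")
  case False
  then obtain \<delta> D where z: "z = Some (\<delta>, D, \<delta>)" "D \<noteq> {}"
    using assms(1) by (blast elim: ES_elim)
  with assms have "x \<noteq> None" "y \<noteq> None" by (metis Some_leq_not_None)+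
  then obtain \<alpha> A \<beta> C where x: "x = Some (\<alpha>, A, \<alpha>)" "A \<in> B"
    and y: "y = Some (\<beta>, C, \<beta>)" "C \<in> B"
    using assms(2,3) by (metis ES_elim)
  have "prefix \<alpha> \<delta>" "prefix \<beta> \<delta>"
    using assms(4,5) x y z by (simp_all add: Some_leq_Some_iff)
  then consider "prefix \<alpha> \<beta>" | "prefix \<beta> \<alpha>" using prefix_same_cases by blast
  then show ?thesis
  proof cases
    case 1
    with assms(4,5) x y z show ?thesis by (simp add: mult_greatest_prefix)
  next
    case 2
    with assms(4,5) x y z have "z \<preceq> mult y x" by (simp add: mult_greatest_prefix)
    with assms(2,3) show ?thesis by (simp add: mult_commute)
  qed
qed simp

lemma leq_trans:
  assumes "x \<in> E" "y \<in> E" "z \<in> E" "x \<preceq> y" "y \<preceq> z"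
  shows "x \<preceq> z"
proof (cases "x = None")
  case False
  then obtain \<alpha> A where x: "x = Some (\<alpha>, A, \<alpha>)" "A \<noteq> {}"
    using assms(1) by (blast elim: ES_elim)
  with assms(4) obtain \<beta> C where y: "y = Some (\<beta>, C, \<beta>)" "C \<noteq> {}"
    using assms(2) by (metis ES_elim Some_leq_not_None)
  with assms(5) obtain \<delta> D where z: "z = Some (\<delta>, D, \<delta>)"
    using assms(3) by (metis ES_elim Some_leq_not_None)
  have \<beta>\<alpha>: "prefix \<beta> \<alpha>" "A \<subseteq> R C (drop (length \<beta>) \<alpha>)"
    using assms(4) x y by (simp_all add: Some_leq_Some_iff)
  have \<delta>\<beta>: "prefix \<delta> \<beta>" "C \<subseteq> R D (drop (length \<delta>) \<beta>)"
    using assms(5) y z by (simp_all add: Some_leq_Some_iff)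
  have "R C (drop (length \<beta>) \<alpha>) \<subseteq> R (R D (drop (length \<delta>) \<beta>)) (drop (length \<beta>) \<alpha>)"
    using \<delta>\<beta>(2) by (rule rel_range_mono)
  also have "\<dots> = R D (drop (length \<delta>) \<alpha>)"
    by (simp add: rel_range_append[symmetric] prefix_drop_append[OF \<delta>\<beta>(1) \<beta>\<alpha>(1)])
  finally show ?thesis
    using x z \<beta>\<alpha> \<delta>\<beta>(1) prefix_order.trans by (auto simp: Some_leq_Some_iff)
qed simp

lemma mult_mono_right:
  assumes "e \<in> E" "f \<in> E" "f' \<in> E" "f' \<preceq> f"
  shows "mult e f' \<preceq> mult e f"
proof -
  have ef': "mult e f' \<in> E" using assms(1,3) by (rule mult_in_E)
  have "mult e f' \<preceq> f" using leq_trans[OF ef' assms(3,2) mult_lower(2)[OF assms(1,3)] assms(4)] .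
  with ef' assms(1,2) show ?thesis using mult_greatest mult_lower(1)[OF assms(1,3)] by blast
qed

lemma mult_None_antimono:
  assumes "z \<in> E" "y \<in> E" "y' \<in> E" "y' \<preceq> y" "mult z y = None"
  shows "mult z y' = None"
  using mult_mono_right[OF assms(1-4)] assms(5) by (simp add: leq_None)

lemma mk_in_E_leq:
  assumes "X \<in> B" "X \<subseteq> R UNIV \<gamma>" "prefix w \<gamma>" "X \<subseteq> R A (drop (length w) \<gamma>)"
  shows "mk \<gamma> X \<gamma> \<in> E" "mk \<gamma> X \<gamma> \<preceq> Some (w, A, w)"
  using assms by (auto simp: mk_def Some_in_ES_iff Some_leq_Some_iff)

lemma mult_mk_not_None:
  assumes "prefix w \<delta>" "v \<in> D" "v \<in> R X (drop (length w) \<delta>)"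
  shows "mult (mk w X w) (Some (\<delta>, D, \<delta>)) \<noteq> None"
proof -
  from assms(3) have "X \<noteq> {}" by auto
  with assms show ?thesis by (auto simp: mk_nonempty mult_Some mk_def)
qed

section \<open>Filters in \<open>E(S)\<close>\<close>

abbreviation filt :: "('a, 'v) selem set \<Rightarrow> bool" where
  "filt \<equiv> filterE Ed r s lab B"

lemma filt_subset_E: "filt \<xi> \<Longrightarrow> \<xi> \<subseteq> E"
  by (simp add: filterE_def)

lemma filt_None: "filt \<xi> \<Longrightarrow> None \<notin> \<xi>"
  by (simp add: filterE_def)

lemma filt_not_None: "filt \<xi> \<Longrightarrow> x \<in> \<xi> \<Longrightarrow> x \<noteq> None"
  by (metis filt_None)

lemma filt_up: "filt \<xi> \<Longrightarrow> x \<in> \<xi> \<Longrightarrow> y \<in> E \<Longrightarrow> x \<preceq> y \<Longrightarrow> y \<in> \<xi>"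
  by (simp add: filterE_def)

lemma filt_elemE:
  assumes "filt \<xi>" "x \<in> \<xi>"
  obtains w A where "x = Some (w, A, w)" "A \<in> B" "A \<noteq> {}" "A \<subseteq> R UNIV w"
proof -
  have "x \<in> E" using assms filt_subset_E by blast
  moreover have "x \<noteq> None" using assms by (rule filt_not_None)
  ultimately show ?thesis using ES_elim that by blast
qed

lemma filt_Some: "filt \<xi> \<Longrightarrow> Some (w, A, w) \<in> \<xi> \<Longrightarrow> A \<in> B \<and> A \<noteq> {} \<and> A \<subseteq> R UNIV w"
  using filt_subset_E Some_in_ES_iff by blast

lemma filt_mk: "filt \<xi> \<Longrightarrow> mk w X w \<in> \<xi> \<Longrightarrow> Some (w, X, w) \<in> \<xi>"
  using filt_None[of \<xi>] by (auto simp: mk_def split: if_splits)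

lemma filt_mult: "filt \<xi> \<Longrightarrow> x \<in> \<xi> \<Longrightarrow> y \<in> \<xi> \<Longrightarrow> mult x y \<in> \<xi>"
proof -
  assume F: "filt \<xi>" and xy: "x \<in> \<xi>" "y \<in> \<xi>"
  then obtain z where z: "z \<in> \<xi>" "z \<preceq> x" "z \<preceq> y" unfolding filterE_def by blast
  have E: "x \<in> E" "y \<in> E" "z \<in> E" using F xy z(1) filt_subset_E by blast+
  have "z \<preceq> mult x y" using mult_greatest[OF E(3,1,2) z(2,3)] .
  then show ?thesis by (rule filt_up[OF F z(1) mult_in_E[OF E(1,2)]])
qed

lemma filt_Some_Int:
  "filt \<xi> \<Longrightarrow> Some (w, A, w) \<in> \<xi> \<Longrightarrow> Some (w, C, w) \<in> \<xi> \<Longrightarrow> Some (w, A \<inter> C, w) \<in> \<xi>"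
  using filt_mult[of \<xi> "Some (w, A, w)" "Some (w, C, w)"] by (simp add: mult_Some filt_mk)

lemma filt_words_comparable:
  assumes "filt \<xi>" "Some (\<alpha>, A, \<alpha>) \<in> \<xi>" "Some (\<beta>, C, \<beta>) \<in> \<xi>"
  shows "prefix \<alpha> \<beta> \<or> prefix \<beta> \<alpha>"
  using filt_mult[OF assms] filt_None[OF assms(1)] by (auto simp: mult_Some split: if_splits)

lemma is_cover_split:
  assumes A: "A \<in> B" "A \<subseteq> R UNIV w" and C: "C \<in> B"
  shows "is_cover Ed r s lab B (Some (w, A, w)) {mk w (A \<inter> C) w, mk w (A - C) w}"
  unfolding is_cover_def
proof (intro conjI ballI impI)
  have "A \<inter> C \<in> B" "A - C \<in> B" using A C by (simp_all add: Int_in_B Diff_in_B)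
  with A show "{mk w (A \<inter> C) w, mk w (A - C) w} \<subseteq> {y \<in> E. y \<preceq> Some (w, A, w)}"
    using mk_in_E_leq[of "A \<inter> C" w w A] mk_in_E_leq[of "A - C" w w A] by auto
next
  fix y assume y: "y \<in> E" "y \<noteq> None \<and> y \<preceq> Some (w, A, w)"
  then obtain \<delta> D where yd: "y = Some (\<delta>, D, \<delta>)" "D \<noteq> {}" by (blast elim: ES_elim)
  with y have w\<delta>: "prefix w \<delta>" and D: "D \<subseteq> R A (drop (length w) \<delta>)"
    by (simp_all add: Some_leq_Some_iff)
  obtain v where v: "v \<in> D" using yd by blast
  have "R A (drop (length w) \<delta>) = R (A \<inter> C) (drop (length w) \<delta>) \<union> R (A - C) (drop (length w) \<delta>)"
    using rel_range_Un[of "A \<inter> C" "A - C"] by (simp add: Int_Diff_Un)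
  with D v have "v \<in> R (A \<inter> C) (drop (length w) \<delta>) \<or> v \<in> R (A - C) (drop (length w) \<delta>)"
    by blast
  with w\<delta> v yd show "\<exists>z\<in>{mk w (A \<inter> C) w, mk w (A - C) w}. mult z y \<noteq> None"
    using mult_mk_not_None by blast
qed

lemma tight_split:
  assumes F: "filt \<xi>" and T: "tight Ed r s lab B \<xi>" and x: "Some (w, A, w) \<in> \<xi>" and C: "C \<in> B"
  shows "Some (w, A \<inter> C, w) \<in> \<xi> \<or> Some (w, A - C, w) \<in> \<xi>"
proof -
  from filt_Some[OF F x] have "A \<in> B" "A \<subseteq> R UNIV w" by simp_all
  from this C have "is_cover Ed r s lab B (Some (w, A, w)) {mk w (A \<inter> C) w, mk w (A - C) w}"
    by (rule is_cover_split)
  moreover have "finite {mk w (A \<inter> C) w, mk w (A - C) w}" by simp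
  ultimately have "{mk w (A \<inter> C) w, mk w (A - C) w} \<inter> \<xi> \<noteq> {}"
    using T x unfolding tight_def by blast
  with F show ?thesis using filt_mk by blast
qed

lemma filterE_upclosure:
  assumes F: "filt \<xi>" and e: "e \<in> E" and ne: "\<forall>f\<in>\<xi>. mult e f \<noteq> None"
  shows "filt {g \<in> E. \<exists>f\<in>\<xi>. mult e f \<preceq> g}" (is "filt ?\<eta>")
  unfolding filterE_def
proof (intro conjI ballI impI)
  have \<xi>E: "\<And>f. f \<in> \<xi> \<Longrightarrow> f \<in> E" using filt_subset_E[OF F] by blast
  show "?\<eta> \<subseteq> E" by blast
  obtain f where "f \<in> \<xi>" using F by (auto simp: filterE_def)
  with e \<xi>E have "e \<in> ?\<eta>" using mult_lower(1) by blast
  then show "?\<eta> \<noteq> {}" by blast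
  show "None \<notin> ?\<eta>" using ne leq_None by blast
next
  fix g h assume g: "g \<in> ?\<eta>" and h: "h \<in> E" "g \<preceq> h"
  then obtain f where f: "f \<in> \<xi>" "mult e f \<preceq> g" by blast
  with e F have "mult e f \<in> E" using filt_subset_E mult_in_E by blast
  with g h f have "mult e f \<preceq> h" using leq_trans by blast
  with f h show "h \<in> ?\<eta>" by blast
next
  fix g1 g2 assume "g1 \<in> ?\<eta>" "g2 \<in> ?\<eta>"
  then obtain f1 f2 where f: "f1 \<in> \<xi>" "f2 \<in> \<xi>" "mult e f1 \<preceq> g1" "mult e f2 \<preceq> g2"
    and g: "g1 \<in> E" "g2 \<in> E" by blast
  let ?f = "mult f1 f2"
  have E: "f1 \<in> E" "f2 \<in> E" "?f \<in> \<xi>" "?f \<in> E" "mult e ?f \<in> E"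
    "mult e f1 \<in> E" "mult e f2 \<in> E"
    using f filt_mult[OF F] filt_subset_E[OF F] e mult_in_E by blast+
  have "mult e ?f \<preceq> mult e f1" "mult e ?f \<preceq> mult e f2"
    using mult_mono_right[OF e] mult_lower[OF E(1,2)] E by blast+
  then have "mult e ?f \<preceq> g1" "mult e ?f \<preceq> g2"
    using leq_trans[OF E(5,6) g(1)] leq_trans[OF E(5,7) g(2)] f by blast+
  moreover have "mult e ?f \<in> ?\<eta>" using E leq_refl by blast
  ultimately show "\<exists>z\<in>?\<eta>. z \<preceq> g1 \<and> z \<preceq> g2" by blast
qed

lemma ultrafilter_meets_None:
  assumes U: "ultrafilterE Ed r s lab B \<xi>" and e: "e \<in> E" "e \<notin> \<xi>"
  shows "\<exists>f\<in>\<xi>. mult e f = None"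
proof (rule ccontr)
  assume "\<not> (\<exists>f\<in>\<xi>. mult e f = None)"
  then have ne: "\<forall>f\<in>\<xi>. mult e f \<noteq> None" by metis
  let ?\<eta> = "{g \<in> E. \<exists>f\<in>\<xi>. mult e f \<preceq> g}"
  have F: "filt \<xi>" using U by (simp add: ultrafilterE_def)
  have "\<xi> \<subseteq> ?\<eta>" using e filt_subset_E[OF F] mult_lower(2) by blast
  with U filterE_upclosure[OF F e(1) ne] have "?\<eta> = \<xi>" by (simp add: ultrafilterE_def)
  moreover obtain f where "f \<in> \<xi>" using F by (auto simp: filterE_def)
  then have "e \<in> ?\<eta>" using e filt_subset_E[OF F] mult_lower(1) by blast
  ultimately show False using e by blast
qed

lemma ultrafilter_avoids_finite:
  assumes U: "ultrafilterE Ed r s lab B \<xi>" and Z: "finite Z" "Z \<subseteq> E" "Z \<inter> \<xi> = {}" and x: "x \<in> \<xi>"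
  shows "\<exists>y\<in>\<xi>. y \<preceq> x \<and> (\<forall>z\<in>Z. mult z y = None)"
  using Z
proof (induction Z rule: finite_induct)
  case empty
  have "x \<in> E" using U x filt_subset_E by (auto simp: ultrafilterE_def)
  with x show ?case using leq_refl by blast
next
  case (insert z Z)
  have F: "filt \<xi>" using U by (simp add: ultrafilterE_def)
  obtain y where y: "y \<in> \<xi>" "y \<preceq> x" "\<forall>z'\<in>Z. mult z' y = None" using insert by auto
  have z: "z \<in> E" "z \<notin> \<xi>" using insert.prems by auto
  obtain f where f: "f \<in> \<xi>" "mult z f = None" using ultrafilter_meets_None[OF U z] by blast
  let ?y = "mult y f"
  have E: "x \<in> E" "y \<in> E" "f \<in> E" "?y \<in> E" using x y f filt_subset_E[OF F] mult_in_E by blast+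
  have "?y \<in> \<xi>" using filt_mult[OF F y(1) f(1)] .
  moreover have "?y \<preceq> x" using leq_trans[OF E(4,2,1) mult_lower(1)[OF E(2,3)] y(2)] .
  moreover have "mult z ?y = None" using mult_None_antimono[OF z(1) E(3,4) mult_lower(2)[OF E(2,3)] f(2)] .
  moreover have "mult z' ?y = None" if "z' \<in> Z" for z'
    using that insert.prems y(3) mult_None_antimono[OF _ E(2,4) mult_lower(1)[OF E(2,3)]] by blast
  ultimately show ?case by blast
qed

lemma ultrafilter_tight:
  assumes U: "ultrafilterE Ed r s lab B \<xi>"
  shows "tight Ed r s lab B \<xi>"
  unfolding tight_def
proof (intro ballI allI impI)
  fix x Z assume x: "x \<in> \<xi>" and Z: "finite Z \<and> is_cover Ed r s lab B x Z"
  have F: "filt \<xi>" using U by (simp add: ultrafilterE_def)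
  show "Z \<inter> \<xi> \<noteq> {}"
  proof
    assume "Z \<inter> \<xi> = {}"
    moreover have "Z \<subseteq> E" using Z by (auto simp: is_cover_def)
    ultimately obtain y where y: "y \<in> \<xi>" "y \<preceq> x" "\<forall>z\<in>Z. mult z y = None"
      using ultrafilter_avoids_finite[OF U _ _ _ x] Z by blast
    have "y \<in> E" "y \<noteq> None" using y(1) filt_subset_E[OF F] filt_not_None[OF F] by blast+
    with Z y show False by (auto simp: is_cover_def)
  qed
qed

section \<open>Filters of infinite type\<close>

lemma infinite_type_long_word:
  assumes F: "filt \<xi>" and I: "infinite_type \<xi>"
  obtains \<alpha> A where "Some (\<alpha>, A, \<alpha>) \<in> \<xi>" "n < length \<alpha>"
proof -
  let ?W = "filter_words \<xi>"
  have "\<exists>\<alpha>\<in>?W. n < length \<alpha>"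
  proof (rule ccontr)
    assume "\<not> (\<exists>\<alpha>\<in>?W. n < length \<alpha>)"
    then have "length ` ?W \<subseteq> {..n}" by (auto simp: not_less)
    then have fin: "finite (length ` ?W)" by (rule finite_subset) simp
    obtain x where "x \<in> \<xi>" using F by (auto simp: filterE_def)
    with F have "?W \<noteq> {}" by (auto elim!: filt_elemE simp: filter_words_def)
    then obtain \<alpha> where "\<alpha> \<in> ?W" "length \<alpha> = Max (length ` ?W)"
      using Max_in[OF fin] by fastforce
    with fin have "finite_type_word \<xi> \<alpha>" by (simp add: finite_type_word_def)
    with I show False by (auto simp: infinite_type_def)
  qed
  with that show ?thesis by (auto simp: filter_words_def)
qed

lemma tight_infinite_type_ultrafilter:
  assumes F: "filt \<xi>" and T: "tight Ed r s lab B \<xi>" and I: "infinite_type \<xi>"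
  shows "ultrafilterE Ed r s lab B \<xi>"
  unfolding ultrafilterE_def
proof (intro conjI allI impI F)
  fix \<eta> assume "filt \<eta> \<and> \<xi> \<subseteq> \<eta>"
  then have G: "filt \<eta>" and sub: "\<xi> \<subseteq> \<eta>" by auto
  have "\<eta> \<subseteq> \<xi>"
  proof
    fix y assume y: "y \<in> \<eta>"
    then obtain \<delta> D where yd: "y = Some (\<delta>, D, \<delta>)" "D \<in> B" "D \<noteq> {}"
      using G by (blast elim: filt_elemE)
    obtain \<delta>' A' where x: "Some (\<delta>', A', \<delta>') \<in> \<xi>" "length \<delta> < length \<delta>'"
      using infinite_type_long_word[OF F I] by blast
    have "prefix \<delta> \<delta>' \<or> prefix \<delta>' \<delta>"
      using filt_words_comparable[OF G] y yd x sub by blast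
    with x(2) have \<delta>\<delta>': "prefix \<delta> \<delta>'" using prefix_length_le by fastforce
    let ?C = "R D (drop (length \<delta>) \<delta>')"
    from tight_split[OF F T x(1) rel_range_in_B[OF yd(2)]]
    show "y \<in> \<xi>"
    proof
      assume part: "Some (\<delta>', A' \<inter> ?C, \<delta>') \<in> \<xi>"
      then have "A' \<inter> ?C \<noteq> {}" using filt_Some[OF F] by blast
      with \<delta>\<delta>' yd(1) have "Some (\<delta>', A' \<inter> ?C, \<delta>') \<preceq> y" by (simp add: Some_leq_Some_iff)
      with part show "y \<in> \<xi>" using filt_up[OF F] y G filt_subset_E by blast
    next
      assume "Some (\<delta>', A' - ?C, \<delta>') \<in> \<xi>"
      with sub have "mult y (Some (\<delta>', A' - ?C, \<delta>')) \<in> \<eta>" using filt_mult[OF G y] by blast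
      moreover have "mult y (Some (\<delta>', A' - ?C, \<delta>')) = None"
        using yd(1) \<delta>\<delta>' by (simp add: mult_Some mk_def)
      ultimately show "y \<in> \<xi>" using filt_None[OF G] by simp
    qed
  qed
  with sub show "\<eta> = \<xi>" by blast
qed

section \<open>Filters of finite type\<close>

lemma mem_xi_at_word:
  "filt \<xi> \<Longrightarrow> A \<in> xi_at B \<xi> \<alpha> (length \<alpha>) \<longleftrightarrow> Some (\<alpha>, A, \<alpha>) \<in> \<xi>"
  using filt_Some by (auto simp: xi_at_def)

lemma finite_type_word_in:
  assumes "finite_type_word \<xi> \<alpha>"
  obtains A where "Some (\<alpha>, A, \<alpha>) \<in> \<xi>"
  using assms by (auto simp: finite_type_word_def filter_words_def)

lemma finite_type_prefix:
  assumes F: "filt \<xi>" and W: "finite_type_word \<xi> \<alpha>" and b: "Some (\<beta>, C, \<beta>) \<in> \<xi>"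
  shows "prefix \<beta> \<alpha>"
proof -
  obtain A where a: "Some (\<alpha>, A, \<alpha>) \<in> \<xi>" using W by (rule finite_type_word_in)
  have len: "length \<beta> \<le> length \<alpha>" using W b by (auto simp: finite_type_word_def filter_words_def)
  from filt_words_comparable[OF F b a] show ?thesis
  proof
    assume "prefix \<alpha> \<beta>"
    with len show ?thesis using prefix_length_prefix[of \<beta> \<beta> \<alpha>] by simp
  qed
qed

lemma finite_type_below:
  assumes F: "filt \<xi>" and W: "finite_type_word \<xi> \<alpha>" and x: "x \<in> \<xi>"
  obtains A where "Some (\<alpha>, A, \<alpha>) \<in> \<xi>" "Some (\<alpha>, A, \<alpha>) \<preceq> x"
proof -
  obtain A0 where a0: "Some (\<alpha>, A0, \<alpha>) \<in> \<xi>" using W by (rule finite_type_word_in)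
  let ?z = "mult x (Some (\<alpha>, A0, \<alpha>))"
  have z: "?z \<in> \<xi>" using filt_mult[OF F x a0] .
  have E: "x \<in> E" "Some (\<alpha>, A0, \<alpha>) \<in> E" using x a0 filt_subset_E[OF F] by auto
  obtain \<delta> D where zd: "?z = Some (\<delta>, D, \<delta>)" "D \<noteq> {}" using F z by (blast elim: filt_elemE)
  have "prefix \<delta> \<alpha>" using finite_type_prefix[OF F W] z zd(1) by simp
  moreover have "prefix \<alpha> \<delta>" using mult_lower(2)[OF E] zd by (simp add: Some_leq_Some_iff)
  ultimately have "\<delta> = \<alpha>" by (rule prefix_order.antisym)
  with z zd mult_lower(1)[OF E] show ?thesis using that by simp
qed

lemma finite_type_set_filter:
  assumes F: "filt \<xi>" and W: "finite_type_word \<xi> \<alpha>"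
  shows "set_filter (Bsub Ed r s lab B \<alpha>) (xi_at B \<xi> \<alpha> (length \<alpha>))"
  unfolding set_filter_def
proof (intro conjI ballI impI)
  note mem = mem_xi_at_word[OF F]
  show "xi_at B \<xi> \<alpha> (length \<alpha>) \<subseteq> Bsub Ed r s lab B \<alpha>"
  proof
    fix A assume "A \<in> xi_at B \<xi> \<alpha> (length \<alpha>)"
    then show "A \<in> Bsub Ed r s lab B \<alpha>" using filt_Some[OF F] by (simp add: mem Bsub_eq)
  qed
  show "{} \<notin> xi_at B \<xi> \<alpha> (length \<alpha>)"
    by (auto simp: mem dest: filt_Some[OF F])
  obtain A where "Some (\<alpha>, A, \<alpha>) \<in> \<xi>" using W by (rule finite_type_word_in)
  then show "xi_at B \<xi> \<alpha> (length \<alpha>) \<noteq> {}" by (auto simp: mem)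
next
  fix A C assume A: "A \<in> xi_at B \<xi> \<alpha> (length \<alpha>)" and C: "C \<in> Bsub Ed r s lab B \<alpha>" "A \<subseteq> C"
  from A have a: "Some (\<alpha>, A, \<alpha>) \<in> \<xi>" by (simp add: mem_xi_at_word[OF F])
  then have "A \<noteq> {}" using filt_Some[OF F] by blast
  with C have "Some (\<alpha>, C, \<alpha>) \<in> E" "Some (\<alpha>, A, \<alpha>) \<preceq> Some (\<alpha>, C, \<alpha>)"
    by (auto simp: Bsub_eq Some_in_ES_iff Some_leq_Some_iff)
  with a have "Some (\<alpha>, C, \<alpha>) \<in> \<xi>" by (rule filt_up[OF F])
  then show "C \<in> xi_at B \<xi> \<alpha> (length \<alpha>)" by (simp add: mem_xi_at_word[OF F])
next
  fix A C assume "A \<in> xi_at B \<xi> \<alpha> (length \<alpha>)" "C \<in> xi_at B \<xi> \<alpha> (length \<alpha>)"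
  then have "A \<inter> C \<in> xi_at B \<xi> \<alpha> (length \<alpha>)"
    by (simp add: mem_xi_at_word[OF F] filt_Some_Int[OF F])
  then show "\<exists>D\<in>xi_at B \<xi> \<alpha> (length \<alpha>). D \<subseteq> A \<and> D \<subseteq> C"
    by (intro bexI[of _ "A \<inter> C"]) auto
qed

lemma tight_finite_type_ultrafilter:
  assumes F: "filt \<xi>" and T: "tight Ed r s lab B \<xi>" and W: "finite_type_word \<xi> \<alpha>"
  shows "set_ultrafilter (Bsub Ed r s lab B \<alpha>) (xi_at B \<xi> \<alpha> (length \<alpha>))"
  unfolding set_ultrafilter_def
proof (intro conjI allI impI finite_type_set_filter[OF F W])
  fix \<psi> assume "set_filter (Bsub Ed r s lab B \<alpha>) \<psi> \<and> xi_at B \<xi> \<alpha> (length \<alpha>) \<subseteq> \<psi>"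
  then have \<psi>: "set_filter (Bsub Ed r s lab B \<alpha>) \<psi>" and sub: "xi_at B \<xi> \<alpha> (length \<alpha>) \<subseteq> \<psi>" by auto
  have "Some (\<alpha>, C, \<alpha>) \<in> \<xi>" if C: "C \<in> \<psi>" for C
  proof -
    have CB: "C \<in> B" "C \<subseteq> R UNIV \<alpha>" using C set_filter_subset[OF \<psi>] by (auto simp: Bsub_eq)
    obtain A where a: "Some (\<alpha>, A, \<alpha>) \<in> \<xi>" using W by (rule finite_type_word_in)
    from tight_split[OF F T a CB(1)] show ?thesis
    proof
      assume part: "Some (\<alpha>, A \<inter> C, \<alpha>) \<in> \<xi>"
      then have "A \<inter> C \<noteq> {}" using filt_Some[OF F] by blast
      with CB have "Some (\<alpha>, C, \<alpha>) \<in> E" "Some (\<alpha>, A \<inter> C, \<alpha>) \<preceq> Some (\<alpha>, C, \<alpha>)"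
        by (auto simp: Some_in_ES_iff Some_leq_Some_iff)
      with part show ?thesis by (rule filt_up[OF F])
    next
      assume "Some (\<alpha>, A - C, \<alpha>) \<in> \<xi>"
      then have "A - C \<in> \<psi>" using sub by (simp add: mem_xi_at_word[OF F] subset_iff)
      then obtain D where "D \<in> \<psi>" "D \<subseteq> A - C" "D \<subseteq> C" using set_filter_lower[OF \<psi> _ C] by blast
      moreover from this have "D = {}" by blast
      ultimately show ?thesis using set_filter_empty[OF \<psi>] by simp
    qed
  qed
  with sub show "\<psi> = xi_at B \<xi> \<alpha> (length \<alpha>)" by (auto simp: mem_xi_at_word[OF F])
qed

lemma out_labels_iff: "a \<in> out_labels Ed s lab A \<longleftrightarrow> R A [a] \<noteq> {}"
  by (auto simp: out_labels_def rel_range_single)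

lemma is_cover_successors:
  assumes A: "A \<in> B" "A \<subseteq> R UNIV \<alpha>"
    and no_sinks: "\<forall>C\<in>Bsub Ed r s lab B \<alpha>. C \<noteq> {} \<longrightarrow> \<not> C \<subseteq> A \<inter> sinks Ed s"
  shows "is_cover Ed r s lab B (Some (\<alpha>, A, \<alpha>))
    ((\<lambda>a. mk (\<alpha> @ [a]) (R A [a]) (\<alpha> @ [a])) ` out_labels Ed s lab A)"
  unfolding is_cover_def
proof (intro conjI ballI impI)
  have "R A [a] \<subseteq> R UNIV (\<alpha> @ [a])" for a
    using rel_range_mono[OF A(2), of "[a]"] by (simp add: rel_range_append)
  with A show "(\<lambda>a. mk (\<alpha> @ [a]) (R A [a]) (\<alpha> @ [a])) ` out_labels Ed s lab A
      \<subseteq> {y \<in> E. y \<preceq> Some (\<alpha>, A, \<alpha>)}"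
    using mk_in_E_leq[of "R A [_]" "\<alpha> @ [_]" \<alpha> A] by (auto simp: rel_range_in_B)
next
  fix y assume y: "y \<in> E" "y \<noteq> None \<and> y \<preceq> Some (\<alpha>, A, \<alpha>)"
  then obtain \<delta> D where yd: "y = Some (\<delta>, D, \<delta>)" "D \<in> B" "D \<noteq> {}" "D \<subseteq> R UNIV \<delta>"
    by (blast elim: ES_elim)
  with y have \<alpha>\<delta>: "prefix \<alpha> \<delta>" and D: "D \<subseteq> R A (drop (length \<alpha>) \<delta>)"
    by (simp_all add: Some_leq_Some_iff)
  show "\<exists>z\<in>(\<lambda>a. mk (\<alpha> @ [a]) (R A [a]) (\<alpha> @ [a])) ` out_labels Ed s lab A. mult z y \<noteq> None"
  proof (cases "drop (length \<alpha>) \<delta>")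
    case Nil
    with \<alpha>\<delta> have "\<delta> = \<alpha>" by (auto simp: prefix_def)
    with D Nil yd have "D \<in> Bsub Ed r s lab B \<alpha>" "D \<subseteq> A" by (simp_all add: Bsub_eq)
    then have "\<not> D \<subseteq> A \<inter> sinks Ed s" using no_sinks yd(3) by blast
    with \<open>D \<subseteq> A\<close> obtain v where v: "v \<in> D" "v \<notin> sinks Ed s" by blast
    then obtain e where e: "e \<in> Ed" "s e = v" by (auto simp: sinks_def)
    with v \<open>D \<subseteq> A\<close> have ea: "r e \<in> R A [lab e]" "r e \<in> R D [lab e]"
      by (auto simp: rel_range_single)
    then have "mult (mk (\<alpha> @ [lab e]) (R A [lab e]) (\<alpha> @ [lab e])) y \<noteq> None"
      using yd(1) \<open>\<delta> = \<alpha>\<close> by (auto simp: mk_nonempty mult_Some mk_def)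
    moreover have "lab e \<in> out_labels Ed s lab A" using ea by (auto simp: out_labels_iff)
    ultimately show ?thesis by blast
  next
    case (Cons a \<gamma>)
    with \<alpha>\<delta> have "prefix (\<alpha> @ [a]) \<delta>" "drop (length (\<alpha> @ [a])) \<delta> = \<gamma>"
      by (auto simp: prefix_def)
    moreover obtain v where "v \<in> D" using yd by blast
    moreover have "D \<subseteq> R (R A [a]) \<gamma>"
      using D Cons rel_range_append[of A "[a]" \<gamma>] by simp
    ultimately have "mult (mk (\<alpha> @ [a]) (R A [a]) (\<alpha> @ [a])) y \<noteq> None"
      using yd(1) mult_mk_not_None by auto
    moreover have "a \<in> out_labels Ed s lab A"
      using \<open>D \<subseteq> R (R A [a]) \<gamma>\<close> yd(3) by (auto simp: out_labels_iff)
    ultimately show ?thesis by blast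
  qed
qed

lemma tight_finite_type_condition:
  assumes F: "filt \<xi>" and T: "tight Ed r s lab B \<xi>" and W: "finite_type_word \<xi> \<alpha>"
    and A: "Some (\<alpha>, A, \<alpha>) \<in> \<xi>"
  shows "infinite (out_labels Ed s lab A) \<or> (\<exists>C\<in>Bsub Ed r s lab B \<alpha>. C \<noteq> {} \<and> C \<subseteq> A \<inter> sinks Ed s)"
proof (rule ccontr)
  assume "\<not> ?thesis"
  then have fin: "finite (out_labels Ed s lab A)"
    and no_sinks: "\<forall>C\<in>Bsub Ed r s lab B \<alpha>. C \<noteq> {} \<longrightarrow> \<not> C \<subseteq> A \<inter> sinks Ed s" by auto
  let ?Z = "(\<lambda>a. mk (\<alpha> @ [a]) (R A [a]) (\<alpha> @ [a])) ` out_labels Ed s lab A"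
  have "is_cover Ed r s lab B (Some (\<alpha>, A, \<alpha>)) ?Z"
    using filt_Some[OF F A] no_sinks by (simp add: is_cover_successors)
  with T A fin have "?Z \<inter> \<xi> \<noteq> {}" unfolding tight_def by blast
  then obtain a where "Some (\<alpha> @ [a], R A [a], \<alpha> @ [a]) \<in> \<xi>" using filt_mk[OF F] by blast
  then have "\<alpha> @ [a] \<in> filter_words \<xi>" by (auto simp: filter_words_def)
  with W show False by (auto simp: finite_type_word_def)
qed

text \<open>For \<open>z\<close> whose word is a prefix of \<open>\<alpha>\<close>, \<open>avoids \<alpha> D z\<close> means that \<open>z (\<alpha>, D, \<alpha>) = 0\<close>.\<close>

definition avoids :: "'a list \<Rightarrow> 'v set \<Rightarrow> ('a, 'v) selem \<Rightarrow> bool" where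
  "avoids \<alpha> D z \<longleftrightarrow>
     (\<forall>\<beta> C. z = Some (\<beta>, C, \<beta>) \<and> prefix \<beta> \<alpha> \<longrightarrow> D \<inter> R C (drop (length \<beta>) \<alpha>) = {})"

lemma avoids_subset: "avoids \<alpha> D z \<Longrightarrow> D' \<subseteq> D \<Longrightarrow> avoids \<alpha> D' z"
  unfolding avoids_def by blast

lemma exists_avoiding:
  assumes F: "filt \<xi>" and W: "finite_type_word \<xi> \<alpha>"
    and U: "set_ultrafilter (Bsub Ed r s lab B \<alpha>) (xi_at B \<xi> \<alpha> (length \<alpha>))"
    and z: "z \<in> E" "z \<notin> \<xi>"
  shows "\<exists>D\<in>xi_at B \<xi> \<alpha> (length \<alpha>). avoids \<alpha> D z"
proof (cases "\<exists>\<beta> C. z = Some (\<beta>, C, \<beta>) \<and> prefix \<beta> \<alpha>")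
  case False
  then have "avoids \<alpha> D z" for D by (auto simp: avoids_def)
  moreover obtain A where "Some (\<alpha>, A, \<alpha>) \<in> \<xi>" using W by (rule finite_type_word_in)
  ultimately show ?thesis by (auto simp: mem_xi_at_word[OF F])
next
  case True
  then obtain \<beta> C where zb: "z = Some (\<beta>, C, \<beta>)" "prefix \<beta> \<alpha>" by blast
  with z have C: "C \<in> B" "C \<noteq> {}" "C \<subseteq> R UNIV \<beta>" by (simp_all add: Some_in_ES_iff)
  let ?C = "R C (drop (length \<beta>) \<alpha>)"
  have "?C \<subseteq> R (R UNIV \<beta>) (drop (length \<beta>) \<alpha>)" using C(3) by (rule rel_range_mono)
  then have "?C \<subseteq> R UNIV \<alpha>" by (simp add: rel_range_append[symmetric] prefix_append_drop[OF zb(2)])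
  with C(1) have C_sub: "?C \<in> Bsub Ed r s lab B \<alpha>" by (simp add: Bsub_eq rel_range_in_B)
  have "?C \<notin> xi_at B \<xi> \<alpha> (length \<alpha>)"
  proof
    assume "?C \<in> xi_at B \<xi> \<alpha> (length \<alpha>)"
    then have c: "Some (\<alpha>, ?C, \<alpha>) \<in> \<xi>" by (simp add: mem_xi_at_word[OF F])
    then have "?C \<noteq> {}" using filt_Some[OF F] by blast
    with zb have "Some (\<alpha>, ?C, \<alpha>) \<preceq> z" by (simp add: Some_leq_Some_iff)
    with c z show False using filt_up[OF F] by blast
  qed
  moreover have "\<forall>X\<in>Bsub Ed r s lab B \<alpha>. \<forall>Y\<in>Bsub Ed r s lab B \<alpha>. X \<inter> Y \<in> Bsub Ed r s lab B \<alpha>"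
    by (auto simp: Bsub_eq Int_in_B)
  ultimately obtain D where "D \<in> xi_at B \<xi> \<alpha> (length \<alpha>)" "D \<inter> ?C = {}"
    using set_ultrafilter_mem_if_meets[OF U _ C_sub] by blast
  with zb show ?thesis by (auto simp: avoids_def)
qed

lemma exists_avoiding_all:
  assumes F: "filt \<xi>" and W: "finite_type_word \<xi> \<alpha>"
    and U: "set_ultrafilter (Bsub Ed r s lab B \<alpha>) (xi_at B \<xi> \<alpha> (length \<alpha>))"
    and Z: "finite Z" "Z \<subseteq> E" "Z \<inter> \<xi> = {}" and A: "A \<in> xi_at B \<xi> \<alpha> (length \<alpha>)"
  shows "\<exists>D\<in>xi_at B \<xi> \<alpha> (length \<alpha>). D \<subseteq> A \<and> (\<forall>z\<in>Z. avoids \<alpha> D z)"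
  using Z
proof (induction Z rule: finite_induct)
  case empty
  with A show ?case by blast
next
  case (insert z Z)
  then obtain D where D: "D \<in> xi_at B \<xi> \<alpha> (length \<alpha>)" "D \<subseteq> A" "\<forall>z\<in>Z. avoids \<alpha> D z"
    by auto
  obtain D' where D': "D' \<in> xi_at B \<xi> \<alpha> (length \<alpha>)" "avoids \<alpha> D' z"
    using exists_avoiding[OF F W U] insert.prems by blast
  from D(1) D'(1) have "D \<inter> D' \<in> xi_at B \<xi> \<alpha> (length \<alpha>)"
    by (simp add: mem_xi_at_word[OF F] filt_Some_Int[OF F])
  moreover have "\<forall>z'\<in>insert z Z. avoids \<alpha> (D \<inter> D') z'"
    using D(3) D'(2) avoids_subset by blast
  ultimately show ?case using D(2) by (intro bexI[of _ "D \<inter> D'"]) auto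
qed

lemma mult_None_if_avoids:
  assumes "avoids \<alpha> D (Some (\<beta>, C, \<beta>))" "C \<in> B" "D \<in> B"
    and "prefix \<beta> \<alpha>" "prefix \<alpha> \<gamma>" "X \<subseteq> R D (drop (length \<alpha>) \<gamma>)"
  shows "mult (Some (\<beta>, C, \<beta>)) (Some (\<gamma>, X, \<gamma>)) = None"
proof -
  let ?d = "drop (length \<alpha>) \<gamma>"
  have \<beta>\<gamma>: "prefix \<beta> \<gamma>" using assms(4,5) by (rule prefix_order.trans)
  have "R C (drop (length \<beta>) \<gamma>) = R (R C (drop (length \<beta>) \<alpha>)) ?d"
    by (simp add: rel_range_append[symmetric] prefix_drop_append[OF assms(4,5)])
  moreover have "R (R C (drop (length \<beta>) \<alpha>)) ?d \<inter> R D ?d = {}"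
    using assms(1-4) by (intro rel_range_disjoint) (auto simp: avoids_def rel_range_in_B)
  ultimately have "R C (drop (length \<beta>) \<gamma>) \<inter> X = {}" using assms(6) by blast
  with \<beta>\<gamma> show ?thesis by (simp add: mult_Some mk_def)
qed

lemma sinks_escape:
  assumes Z: "Z \<subseteq> E" "\<forall>z\<in>Z. avoids \<alpha> D z" and D: "D \<in> B"
    and X: "X \<subseteq> D \<inter> sinks Ed s"
  shows "\<forall>z\<in>Z. mult z (Some (\<alpha>, X, \<alpha>)) = None"
proof
  fix z assume z: "z \<in> Z"
  show "mult z (Some (\<alpha>, X, \<alpha>)) = None"
  proof (cases "z = None")
    case False
    with z Z(1) obtain \<beta> C where zb: "z = Some (\<beta>, C, \<beta>)" "C \<in> B" by (blast elim: ES_elim)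
    consider "prefix \<beta> \<alpha>" | "strict_prefix \<alpha> \<beta>" | "\<not> prefix \<beta> \<alpha>" "\<not> prefix \<alpha> \<beta>"
      by (auto simp: strict_prefix_def)
    then show ?thesis
    proof cases
      case 1
      have "avoids \<alpha> D (Some (\<beta>, C, \<beta>))" using z zb(1) Z(2) by blast
      from mult_None_if_avoids[OF this zb(2) D 1 prefix_order.refl] X zb(1) show ?thesis by auto
    next
      case 2
      then have "drop (length \<alpha>) \<beta> \<noteq> []" by (auto simp: strict_prefix_def prefix_def)
      with X have "R X (drop (length \<alpha>) \<beta>) = {}" by (intro rel_range_sinks) auto
      with 2 zb show ?thesis by (auto simp: mult_Some mk_def strict_prefix_def)
    next
      case 3
      with zb show ?thesis by (simp add: mult_Some)
    qed
  qed simp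
qed

lemma new_label_escape:
  assumes Z: "Z \<subseteq> E" "\<forall>z\<in>Z. avoids \<alpha> D z" and D: "D \<in> B"
    and a: "\<forall>z\<in>Z. \<forall>\<beta> C. z = Some (\<beta>, C, \<beta>) \<longrightarrow> \<not> prefix (\<alpha> @ [a]) \<beta>"
  shows "\<forall>z\<in>Z. mult z (Some (\<alpha> @ [a], R D [a], \<alpha> @ [a])) = None"
proof
  fix z assume z: "z \<in> Z"
  show "mult z (Some (\<alpha> @ [a], R D [a], \<alpha> @ [a])) = None"
  proof (cases "z = None")
    case False
    with z Z(1) obtain \<beta> C where zb: "z = Some (\<beta>, C, \<beta>)" "C \<in> B" by (blast elim: ES_elim)
    with z a have not_ext: "\<not> prefix (\<alpha> @ [a]) \<beta>" by blast
    show ?thesis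
    proof (cases "prefix \<beta> (\<alpha> @ [a])")
      case True
      with not_ext have "prefix \<beta> \<alpha>" by auto
      have "avoids \<alpha> D (Some (\<beta>, C, \<beta>))" using z zb(1) Z(2) by blast
      from mult_None_if_avoids[OF this zb(2) D \<open>prefix \<beta> \<alpha>\<close>] zb(1) show ?thesis by simp
    next
      case False
      with not_ext zb show ?thesis by (simp add: mult_Some)
    qed
  qed simp
qed

lemma exists_escaping:
  assumes Z: "finite Z" "Z \<subseteq> E" "\<forall>z\<in>Z. avoids \<alpha> D z" and D: "D \<in> B" "D \<subseteq> R UNIV \<alpha>"
    and cond: "infinite (out_labels Ed s lab D) \<or> (\<exists>C\<in>Bsub Ed r s lab B \<alpha>. C \<noteq> {} \<and> C \<subseteq> D \<inter> sinks Ed s)"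
  obtains y where "y \<in> E" "y \<noteq> None" "y \<preceq> Some (\<alpha>, D, \<alpha>)" "\<forall>z\<in>Z. mult z y = None"
  using cond
proof
  assume "infinite (out_labels Ed s lab D)"
  \<comment> \<open>the letter following \<open>\<alpha>\<close> in the word of each \<open>z\<close> (junk for \<open>None\<close> and short words)\<close>
  moreover let ?next = "(\<lambda>z. hd (drop (length \<alpha>) (fst (the z)))) ` Z"
  have "finite ?next" using Z(1) by simp
  ultimately have "infinite (out_labels Ed s lab D - ?next)" by (rule Diff_infinite_finite[rotated])
  then have "out_labels Ed s lab D - ?next \<noteq> {}" by (rule infinite_imp_nonempty)
  then obtain a where a: "a \<in> out_labels Ed s lab D" "a \<notin> ?next" by blast
  have "\<forall>z\<in>Z. \<forall>\<beta> C. z = Some (\<beta>, C, \<beta>) \<longrightarrow> \<not> prefix (\<alpha> @ [a]) \<beta>"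
  proof (intro ballI allI impI notI)
    fix z \<beta> C assume "z \<in> Z" "z = Some (\<beta>, C, \<beta>)" "prefix (\<alpha> @ [a]) \<beta>"
    then have "a \<in> ?next" by (force simp: prefix_def)
    with a(2) show False by blast
  qed
  with Z(2,3) D(1) have "\<forall>z\<in>Z. mult z (Some (\<alpha> @ [a], R D [a], \<alpha> @ [a])) = None"
    by (rule new_label_escape)
  moreover have "R D [a] \<subseteq> R UNIV (\<alpha> @ [a])"
    using rel_range_mono[OF D(2), of "[a]"] by (simp add: rel_range_append)
  with a(1) D(1) have "Some (\<alpha> @ [a], R D [a], \<alpha> @ [a]) \<in> E"
    "Some (\<alpha> @ [a], R D [a], \<alpha> @ [a]) \<preceq> Some (\<alpha>, D, \<alpha>)"
    by (simp_all add: out_labels_iff Some_in_ES_iff Some_leq_Some_iff rel_range_in_B)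
  ultimately show thesis using that by blast
next
  assume "\<exists>C\<in>Bsub Ed r s lab B \<alpha>. C \<noteq> {} \<and> C \<subseteq> D \<inter> sinks Ed s"
  then obtain C where C: "C \<in> B" "C \<subseteq> R UNIV \<alpha>" "C \<noteq> {}" "C \<subseteq> D \<inter> sinks Ed s"
    by (auto simp: Bsub_eq)
  then have "Some (\<alpha>, C, \<alpha>) \<in> E" "Some (\<alpha>, C, \<alpha>) \<preceq> Some (\<alpha>, D, \<alpha>)"
    by (auto simp: Some_in_ES_iff Some_leq_Some_iff)
  moreover have "\<forall>z\<in>Z. mult z (Some (\<alpha>, C, \<alpha>)) = None"
    using Z(2,3) D(1) C(4) by (rule sinks_escape)
  ultimately show thesis using that by blast
qed

lemma finite_type_condition_tight:
  assumes F: "filt \<xi>" and W: "finite_type_word \<xi> \<alpha>"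
    and U: "set_ultrafilter (Bsub Ed r s lab B \<alpha>) (xi_at B \<xi> \<alpha> (length \<alpha>))"
    and cond: "\<forall>A\<in>xi_at B \<xi> \<alpha> (length \<alpha>). infinite (out_labels Ed s lab A) \<or>
                 (\<exists>C\<in>Bsub Ed r s lab B \<alpha>. C \<noteq> {} \<and> C \<subseteq> A \<inter> sinks Ed s)"
  shows "tight Ed r s lab B \<xi>"
  unfolding tight_def
proof (intro ballI allI impI)
  fix x Z assume x: "x \<in> \<xi>" and "finite Z \<and> is_cover Ed r s lab B x Z"
  then have Z: "finite Z" "Z \<subseteq> E"
    and cover: "\<forall>y\<in>E. y \<noteq> None \<and> y \<preceq> x \<longrightarrow> (\<exists>z\<in>Z. mult z y \<noteq> None)"
    by (auto simp: is_cover_def)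
  show "Z \<inter> \<xi> \<noteq> {}"
  proof
    assume Z\<xi>: "Z \<inter> \<xi> = {}"
    obtain A where A: "Some (\<alpha>, A, \<alpha>) \<in> \<xi>" "Some (\<alpha>, A, \<alpha>) \<preceq> x"
      using finite_type_below[OF F W x] by blast
    then have "A \<in> xi_at B \<xi> \<alpha> (length \<alpha>)" by (simp add: mem_xi_at_word[OF F])
    then obtain D where D: "D \<in> xi_at B \<xi> \<alpha> (length \<alpha>)" "D \<subseteq> A" "\<forall>z\<in>Z. avoids \<alpha> D z"
      using exists_avoiding_all[OF F W U Z Z\<xi>] by blast
    then have "Some (\<alpha>, D, \<alpha>) \<in> \<xi>" by (simp add: mem_xi_at_word[OF F])
    then have DB: "D \<in> B" "D \<noteq> {}" "D \<subseteq> R UNIV \<alpha>" using filt_Some[OF F] by auto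
    obtain y where y: "y \<in> E" "y \<noteq> None" "y \<preceq> Some (\<alpha>, D, \<alpha>)" "\<forall>z\<in>Z. mult z y = None"
      by (rule exists_escaping[OF Z D(3) DB(1,3) cond[rule_format, OF D(1)]])
    have "Some (\<alpha>, D, \<alpha>) \<preceq> Some (\<alpha>, A, \<alpha>)" using D(2) DB(2) by (simp add: Some_leq_Some_iff)
    moreover have "Some (\<alpha>, D, \<alpha>) \<in> E" "Some (\<alpha>, A, \<alpha>) \<in> E" "x \<in> E"
      using \<open>Some (\<alpha>, D, \<alpha>) \<in> \<xi>\<close> A(1) x filt_subset_E[OF F] by blast+
    ultimately have "y \<preceq> x" using y(1,3) A(2) leq_trans by blast
    with cover y(1,2) have "\<exists>z\<in>Z. mult z y \<noteq> None" by simp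
    with y(4) show False by auto
  qed
qed

lemma tight_iff_infinite_type:
  assumes "filt \<xi>" "infinite_type \<xi>"
  shows "tight Ed r s lab B \<xi> \<longleftrightarrow> ultrafilterE Ed r s lab B \<xi>"
  using assms tight_infinite_type_ultrafilter ultrafilter_tight by blast

lemma tight_iff_finite_type:
  assumes F: "filt \<xi>" and W: "finite_type_word \<xi> \<alpha>"
  shows "tight Ed r s lab B \<xi> \<longleftrightarrow>
    set_ultrafilter (Bsub Ed r s lab B \<alpha>) (xi_at B \<xi> \<alpha> (length \<alpha>)) \<and>
    (\<forall>A\<in>xi_at B \<xi> \<alpha> (length \<alpha>). infinite (out_labels Ed s lab A) \<or>
      (\<exists>C\<in>Bsub Ed r s lab B \<alpha>. C \<noteq> {} \<and> C \<subseteq> A \<inter> sinks Ed s))"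
  using tight_finite_type_ultrafilter[OF F _ W] tight_finite_type_condition[OF F _ W]
    finite_type_condition_tight[OF F W] by (auto simp: mem_xi_at_word[OF F])

end

theorem mainTheorem18:
  fixes Ed :: "'e set" and r s :: "'e \<Rightarrow> 'v" and lab :: "'e \<Rightarrow> 'a"
    and B :: "'v set set" and \<xi> :: "('a,'v) selem set"
  assumes "countable (UNIV :: 'v set)" and "countable Ed"
    and "accommodating Ed r s lab B"
    and "weakly_left_resolving Ed r s lab B"
    and "closed_rel_compl B"
    and "filterE Ed r s lab B \<xi>"
  shows "tight Ed r s lab B \<xi> \<longleftrightarrow>
     ((infinite_type \<xi> \<and> ultrafilterE Ed r s lab B \<xi>) \<or>
      (\<exists>\<alpha>. finite_type_word \<xi> \<alpha> \<and>
         set_ultrafilter (Bsub Ed r s lab B \<alpha>) (xi_at B \<xi> \<alpha> (length \<alpha>)) \<and>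
         (\<forall>A\<in>xi_at B \<xi> \<alpha> (length \<alpha>).
            infinite (out_labels Ed s lab A) \<or>
            (\<exists>C\<in>Bsub Ed r s lab B \<alpha>. C \<noteq> {} \<and> C \<subseteq> A \<inter> sinks Ed s))))"
proof -
  interpret labelled_space Ed r s lab B
    using assms(3-5) by unfold_locales
  show ?thesis
  proof (cases "infinite_type \<xi>")
    case True
    then show ?thesis
      using tight_iff_infinite_type[OF assms(6)] by (auto simp: infinite_type_def)
  next
    case False
    then obtain \<alpha> where "finite_type_word \<xi> \<alpha>" by (auto simp: infinite_type_def)
    with False show ?thesis
      using tight_iff_finite_type[OF assms(6)] by blast
  qed
qed

end
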